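(* Let $f:\mathbb{R}^n\times\mathbb{R}_{\ge 0}\to\mathbb{R}^n$ be smooth and let $\gamma_1,\dots,\gamma_s$ be linear operators such that $f$ is $\gamma_i$-equivariant for each $i$; set $\mathcal{M}_i=\{x:\gamma_i x=x\}$ and $\mathcal{M}_\cap=\bigcap_{i=1}^s\mathcal{M}_i$, and assume $\mathcal{M}_\cap\neq\{0\}$. If either (i) $\dot x=f(x,t)$ is contracting towards each subspace $\mathcal{M}_i$, $i=1,\dots,s$, or (ii) $\dot x=f(x,t)$ is contracting, then every solution of $\dot x=f(x,t)$ converges to $\mathcal{M}_\cap$ as $t\to+\infty$, i.e. all solutions asymptotically exhibit the symmetry defined by $\mathcal{M}_\cap$.
   Context: $f$ is $\gamma$-equivariant if $f(\gamma x,t)=\gamma f(x,t)$ for all $x,t$; then $\mathcal{M}_\gamma=\{x:\gamma x=x\}$ is flow-invariant. Given a vector norm with induced matrix norm $\|\cdot\|$, the matrix measure is $\mu(A)=\lim_{h\searrow0}\frac1h(\|I+hA\|-1)$. The system $\dot x=f(x,t)$ is contracting if there exist a matrix measure $\mu$ (possibly induced by a weighted norm $|\Theta x|_i$, $i\in\{1,2,\infty\}$, $\Theta$ constant invertible) and $\lambda>0$ with $\mu(\partial f/\partial x(x,t))\le-\lambda$ for all $x$ and $t\ge0$; then any two trajectories converge exponentially to each other. The system is contracting towards a flow-invariant linear subspace $\mathcal{M}$ if all its trajectories converge exponentially towards $\mathcal{M}$. *)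

theory Defs
  imports "HOL-Analysis.Analysis"
begin

text \<open>Vector fields are f :: real^'n => real => real^'n, f x t, meaningful for t >= 0.\<close>

text \<open>Smoothness, rendered as joint continuous differentiability (C^1) on R^n x [0,inf).\<close>
definition C1_field :: "(real^'n \<Rightarrow> real \<Rightarrow> real^'n) \<Rightarrow> bool" where
  "C1_field f \<longleftrightarrow>
     (\<exists>D :: ((real^'n) \<times> real) \<Rightarrow> (((real^'n) \<times> real) \<Rightarrow>\<^sub>L (real^'n)).
        (\<forall>p \<in> UNIV \<times> {0..}. ((\<lambda>q. f (fst q) (snd q)) has_derivative blinfun_apply (D p))
                                  (at p within UNIV \<times> {0..})) \<and>
        continuous_on (UNIV \<times> {0..}) D)"

definition jac :: "(real^'n \<Rightarrow> real \<Rightarrow> real^'n) \<Rightarrow> real^'n \<Rightarrow> real \<Rightarrow> real^'n^'n" where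
  "jac f x t = matrix (frechet_derivative (\<lambda>y. f y t) (at x))"

definition equivariant :: "(real^'n \<Rightarrow> real \<Rightarrow> real^'n) \<Rightarrow> real^'n^'n \<Rightarrow> bool" where
  "equivariant f g \<longleftrightarrow> (\<forall>x t. t \<ge> 0 \<longrightarrow> f (g *v x) t = g *v f x t)"

definition fix_space :: "real^'n^'n \<Rightarrow> (real^'n) set" where
  "fix_space g = {x. g *v x = x}"

definition is_solution :: "(real^'n \<Rightarrow> real \<Rightarrow> real^'n) \<Rightarrow> real \<Rightarrow> (real \<Rightarrow> real^'n) \<Rightarrow> bool" where
  "is_solution f t0 x \<longleftrightarrow>
     (\<forall>t \<ge> t0. (x has_vector_derivative f (x t) t) (at t within {t0..}))"

definition is_vnorm :: "(real^'n \<Rightarrow> real) \<Rightarrow> bool" where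
  "is_vnorm N \<longleftrightarrow> (\<forall>x. N x \<ge> 0) \<and> (\<forall>x. N x = 0 \<longleftrightarrow> x = 0) \<and>
     (\<forall>c x. N (c *\<^sub>R x) = \<bar>c\<bar> * N x) \<and> (\<forall>x y. N (x + y) \<le> N x + N y)"

definition ind_norm :: "(real^'n \<Rightarrow> real) \<Rightarrow> real^'n^'n \<Rightarrow> real" where
  "ind_norm N A = Sup {N (A *v v) | v. N v = 1}"

definition matrix_measure :: "(real^'n \<Rightarrow> real) \<Rightarrow> real^'n^'n \<Rightarrow> real" where
  "matrix_measure N A = Lim (at_right 0) (\<lambda>h. (ind_norm N (mat 1 + h *\<^sub>R A) - 1) / h)"

definition contracting :: "(real^'n \<Rightarrow> real \<Rightarrow> real^'n) \<Rightarrow> bool" where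
  "contracting f \<longleftrightarrow> (\<exists>N lam. is_vnorm N \<and> lam > 0 \<and>
      (\<forall>x t. t \<ge> 0 \<longrightarrow> matrix_measure N (jac f x t) \<le> - lam))"

definition contracting_towards :: "(real^'n \<Rightarrow> real \<Rightarrow> real^'n) \<Rightarrow> (real^'n) set \<Rightarrow> bool" where
  "contracting_towards f M \<longleftrightarrow> (\<forall>t0 x. t0 \<ge> 0 \<longrightarrow> is_solution f t0 x \<longrightarrow>
      (\<exists>C lam. lam > 0 \<and> (\<forall>t \<ge> t0. infdist (x t) M \<le> C * exp (- lam * (t - t0)))))"

end

theory Submission
  imports Defs "HOL-Real_Asymp.Real_Asymp"
begin

(*
  Write K for the common fixed space of the operators \<gamma>_1, ..., \<gamma>_s.  The whole proof rests
  on a linear-algebra estimate (a Hoffman-type bound): the distance of x to K is at most a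
  constant times the sum of the "symmetry residuals" |x - \<gamma>_i x|.  So it suffices to show that
  every residual of a solution tends to 0:
  (i)  if the system contracts towards Fix(\<gamma>_i), the residual is bounded by a multiple of the
       distance to Fix(\<gamma>_i), which decays exponentially;
  (ii) if the system is contracting, \<gamma>_i x(t) is again a solution by equivariance, and any two
       solutions of a contracting system approach each other.
  Part (ii) is the analytic core.  For the norm N of the contraction hypothesis we derive from
  the definition of the matrix measure the one-step bound N(v + hAv) \<le> (1 - h\<lambda> + h\<epsilon>) N v, lift
  it from the Jacobian to the difference f(a,t) - f(b,t) by linearising along the segment
  [b,a], and conclude with a Dini-derivative comparison argument that N(x(t) - y(t)) \<rightarrow> 0.
  The file follows this order: vector norms, induced norms, matrix measures, Dini
  comparison, linearisation, contracting systems, the distance bound, and finally the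
  symmetry argument.
*)

section \<open>Vector norms\<close>

lemma vnorm_nonneg: "is_vnorm N \<Longrightarrow> N x \<ge> 0"
  unfolding is_vnorm_def by blast

lemma vnorm_eq_0: "is_vnorm N \<Longrightarrow> N x = 0 \<longleftrightarrow> x = 0"
  unfolding is_vnorm_def by blast

lemma vnorm_zero: "is_vnorm N \<Longrightarrow> N 0 = 0"
  unfolding is_vnorm_def by blast

lemma vnorm_pos: "is_vnorm N \<Longrightarrow> x \<noteq> 0 \<Longrightarrow> N x > 0"
  using vnorm_nonneg vnorm_eq_0 by (metis less_eq_real_def)

lemma vnorm_scaleR: "is_vnorm N \<Longrightarrow> N (c *\<^sub>R x) = \<bar>c\<bar> * N x"
  unfolding is_vnorm_def by blast

lemma vnorm_triangle: "is_vnorm N \<Longrightarrow> N (x + y) \<le> N x + N y"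
  unfolding is_vnorm_def by blast

lemma vnorm_minus: "is_vnorm N \<Longrightarrow> N (- x) = N x"
  using vnorm_scaleR[of N "-1" x] by simp

lemma vnorm_diff_le: "is_vnorm N \<Longrightarrow> N x - N y \<le> N (x - y)"
  using vnorm_triangle[of N "x - y" y] by simp

lemma vnorm_sum:
  assumes "is_vnorm N"
  shows "N (sum f A) \<le> (\<Sum>a\<in>A. N (f a))"
proof (induction A rule: infinite_finite_induct)
  case (insert x F)
  then show ?case using vnorm_triangle[OF assms, of "f x" "sum f F"] by simp
qed (simp_all add: vnorm_zero[OF assms])

lemma vnorm_le_norm:
  fixes N :: "real^'n \<Rightarrow> real"
  assumes N: "is_vnorm N"
  obtains K where "K > 0" "\<And>x. N x \<le> K * norm x"
proof -
  define K where "K = 1 + (\<Sum>i\<in>UNIV. N (axis i (1::real)))"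
  have "K > 0" unfolding K_def using vnorm_nonneg[OF N] by (simp add: add_pos_nonneg sum_nonneg)
  moreover have "N x \<le> K * norm x" for x :: "real^'n"
  proof -
    have "N x = N (\<Sum>i\<in>UNIV. (x$i) *\<^sub>R axis i 1)"
      using basis_expansion[of x] by (simp add: scalar_mult_eq_scaleR)
    also have "\<dots> \<le> (\<Sum>i\<in>UNIV. N ((x$i) *\<^sub>R axis i 1))" by (rule vnorm_sum[OF N])
    also have "\<dots> = (\<Sum>i\<in>UNIV. \<bar>x$i\<bar> * N (axis i 1))" by (simp add: vnorm_scaleR[OF N])
    also have "\<dots> \<le> (\<Sum>i\<in>UNIV. norm x * N (axis i 1))"
      by (intro sum_mono mult_right_mono component_le_norm_cart vnorm_nonneg[OF N])
    also have "\<dots> \<le> K * norm x"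
      unfolding K_def by (simp add: sum_distrib_left[symmetric] algebra_simps)
    finally show ?thesis .
  qed
  ultimately show ?thesis using that by blast
qed

lemma vnorm_continuous:
  fixes N :: "real^'n \<Rightarrow> real"
  assumes N: "is_vnorm N"
  shows "continuous_on S N"
proof -
  obtain K where K: "K > 0" "\<And>x. N x \<le> K * norm x" using vnorm_le_norm[OF N] by blast
  have "\<bar>N x - N y\<bar> \<le> K * dist x y" for x y
    using vnorm_diff_le[OF N, of x y] vnorm_diff_le[OF N, of y x] K(2)[of "x - y"] K(2)[of "y - x"]
    by (simp add: dist_norm norm_minus_commute)
  then have "lipschitz_on K S N"
    using K(1) by (intro lipschitz_onI) (auto simp: dist_real_def mult.commute)
  then show ?thesis by (rule lipschitz_on_continuous_on)
qed

text \<open>\<dots> and dominates a positive multiple of it (compactness of the Euclidean unit sphere).\<close>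

lemma norm_le_vnorm:
  fixes N :: "real^'n \<Rightarrow> real"
  assumes N: "is_vnorm N"
  obtains k where "k > 0" "\<And>x. k * norm x \<le> N x"
proof -
  have ne: "sphere (0::real^'n) 1 \<noteq> {}"
    using norm_axis_1[of undefined] by (metis empty_iff mem_sphere_0)
  obtain m where m: "m \<in> sphere 0 1" "\<And>y. y \<in> sphere 0 1 \<Longrightarrow> N m \<le> N y"
    using continuous_attains_inf[OF compact_sphere ne vnorm_continuous[OF N]] by blast
  have Nm: "N m > 0" using m(1) by (intro vnorm_pos[OF N]) auto
  have "N m * norm x \<le> N x" for x
  proof (cases "x = 0")
    case False
    have "N m \<le> N ((1 / norm x) *\<^sub>R x)" using m(2) False by simp
    also have "\<dots> = N x / norm x" using vnorm_scaleR[OF N] by simp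
    finally show ?thesis using False by (simp add: field_simps)
  qed (simp add: vnorm_zero[OF N])
  then show ?thesis using Nm that by blast
qed

text \<open>The unit sphere of N is nonempty, so the supremum defining ind_norm is over a nonempty set.\<close>

lemma vnorm_unit_exists:
  fixes N :: "real^'n \<Rightarrow> real"
  assumes N: "is_vnorm N"
  obtains v where "N v = 1"
proof -
  define e :: "real^'n" where "e = axis undefined 1"
  have "N e > 0" unfolding e_def by (intro vnorm_pos[OF N]) (simp add: axis_eq_0_iff)
  then have "N ((1 / N e) *\<^sub>R e) = 1" using vnorm_scaleR[OF N] by simp
  then show ?thesis using that by blast
qed

section \<open>Induced matrix norms\<close>

text \<open>The set defining ind_norm N A is bounded (by norm equivalence), so ind_norm N A is the
  least bound for N (A v) on the unit sphere of N, and N (A v) \<le> ind_norm N A * N v.\<close>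

lemma ind_norm_bdd:
  fixes N :: "real^'n \<Rightarrow> real"
  assumes N: "is_vnorm N"
  shows "bdd_above {N (A *v v) | v. N v = 1}"
proof -
  obtain K where K: "K > 0" "\<And>x. N x \<le> K * norm x" using vnorm_le_norm[OF N] by blast
  obtain k where k: "k > 0" "\<And>x. k * norm x \<le> N x" using norm_le_vnorm[OF N] by blast
  obtain b where b: "b > 0" "\<And>v. norm (A *v v) \<le> norm v * b"
    using bounded_linear.pos_bounded[OF matrix_vector_mul_bounded_linear] by blast
  have "N (A *v v) \<le> K * b / k" if "N v = 1" for v
  proof -
    have "norm v \<le> 1 / k" using k(2)[of v] that k(1) by (simp add: field_simps)
    then have "norm v * b \<le> (1 / k) * b" using b(1) by (intro mult_right_mono) auto
    then have "norm (A *v v) \<le> b / k" using b(2)[of v] by simp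
    then have "K * norm (A *v v) \<le> K * (b / k)" using K(1) by (intro mult_left_mono) auto
    then show ?thesis using K(2)[of "A *v v"] by simp
  qed
  then show ?thesis by (auto intro!: bdd_aboveI)
qed

lemma ind_norm_ge:
  fixes N :: "real^'n \<Rightarrow> real"
  assumes "is_vnorm N" "N v = 1"
  shows "N (A *v v) \<le> ind_norm N A"
  unfolding ind_norm_def using assms(2) by (intro cSup_upper ind_norm_bdd[OF assms(1)]) auto

lemma ind_norm_apply:
  fixes N :: "real^'n \<Rightarrow> real"
  assumes N: "is_vnorm N"
  shows "N (A *v v) \<le> ind_norm N A * N v"
proof (cases "v = 0")
  case False
  then have Nv: "N v > 0" by (rule vnorm_pos[OF N])
  have "N ((1 / N v) *\<^sub>R v) = 1" using Nv vnorm_scaleR[OF N] by simp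
  then have "N (A *v ((1 / N v) *\<^sub>R v)) \<le> ind_norm N A" by (rule ind_norm_ge[OF N])
  then have "N (A *v v) / N v \<le> ind_norm N A"
    using Nv by (simp add: matrix_vector_mult_scaleR vnorm_scaleR[OF N])
  then show ?thesis using Nv by (simp add: field_simps)
qed (simp add: vnorm_zero[OF N])

lemma ind_norm_least:
  fixes N :: "real^'n \<Rightarrow> real"
  assumes N: "is_vnorm N" and bound: "\<And>v. N v = 1 \<Longrightarrow> N (A *v v) \<le> c"
  shows "ind_norm N A \<le> c"
proof -
  obtain u where "N u = 1" using vnorm_unit_exists[OF N] by blast
  then show ?thesis unfolding ind_norm_def using bound by (intro cSup_least) auto
qed

section \<open>The matrix measure as a one-sided derivative\<close>

lemma mat_one_plus_apply: "(mat 1 + h *\<^sub>R A) *v v = v + h *\<^sub>R (A *v (v::real^'n))"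
  for A :: "real^'n^'n"
  by (simp add: matrix_vector_mult_add_rdistrib scaleR_matrix_vector_assoc[symmetric])

text \<open>The difference quotient defining the matrix measure; by convexity of the induced norm
  it is nondecreasing in h and bounded below, so its right limit at 0 exists.\<close>

definition measure_quotient :: "(real^'n \<Rightarrow> real) \<Rightarrow> real^'n^'n \<Rightarrow> real \<Rightarrow> real" where
  "measure_quotient N A h = (ind_norm N (mat 1 + h *\<^sub>R A) - 1) / h"

lemma measure_quotient_mono:
  fixes N :: "real^'n \<Rightarrow> real"
  assumes N: "is_vnorm N" and h: "0 < h1" "h1 \<le> h2"
  shows "measure_quotient N A h1 \<le> measure_quotient N A h2"
proof -
  define r where "r = h1 / h2"
  have r: "0 < r" "r \<le> 1" using h unfolding r_def by auto
  have "ind_norm N (mat 1 + h1 *\<^sub>R A) \<le> r * ind_norm N (mat 1 + h2 *\<^sub>R A) + (1 - r)"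
  proof (rule ind_norm_least[OF N])
    fix v assume v: "N v = 1"
    have "(mat 1 + h1 *\<^sub>R A) *v v = r *\<^sub>R ((mat 1 + h2 *\<^sub>R A) *v v) + (1 - r) *\<^sub>R v"
      using h unfolding mat_one_plus_apply r_def by (simp add: algebra_simps)
    then have "N ((mat 1 + h1 *\<^sub>R A) *v v)
        \<le> N (r *\<^sub>R ((mat 1 + h2 *\<^sub>R A) *v v)) + N ((1 - r) *\<^sub>R v)"
      by (simp add: vnorm_triangle[OF N])
    also have "\<dots> = r * N ((mat 1 + h2 *\<^sub>R A) *v v) + (1 - r)"
      using r v by (simp add: vnorm_scaleR[OF N])
    also have "\<dots> \<le> r * ind_norm N (mat 1 + h2 *\<^sub>R A) + (1 - r)"
      using r ind_norm_ge[OF N v] by (simp add: mult_left_mono)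
    finally show "N ((mat 1 + h1 *\<^sub>R A) *v v) \<le> r * ind_norm N (mat 1 + h2 *\<^sub>R A) + (1 - r)" .
  qed
  then have "ind_norm N (mat 1 + h1 *\<^sub>R A) - 1 \<le> r * (ind_norm N (mat 1 + h2 *\<^sub>R A) - 1)"
    by (simp add: algebra_simps)
  then have "(ind_norm N (mat 1 + h1 *\<^sub>R A) - 1) / h1
      \<le> r * (ind_norm N (mat 1 + h2 *\<^sub>R A) - 1) / h1"
    using h by (simp add: divide_right_mono)
  also have "\<dots> = measure_quotient N A h2"
    unfolding measure_quotient_def r_def using h by simp
  finally show ?thesis unfolding measure_quotient_def .
qed

lemma measure_quotient_lower:
  fixes N :: "real^'n \<Rightarrow> real"
  assumes N: "is_vnorm N" and h: "h > 0"
  shows "- ind_norm N A \<le> measure_quotient N A h"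
proof -
  obtain u where u: "N u = 1" using vnorm_unit_exists[OF N] by blast
  have "1 - h * ind_norm N A \<le> N u - N (h *\<^sub>R (A *v u))"
    using u ind_norm_ge[OF N u, of A] h by (simp add: vnorm_scaleR[OF N] mult_left_mono)
  also have "\<dots> \<le> N (u + h *\<^sub>R (A *v u))"
    using vnorm_diff_le[OF N, of u "- (h *\<^sub>R (A *v u))"] by (simp add: vnorm_minus[OF N])
  also have "\<dots> \<le> ind_norm N (mat 1 + h *\<^sub>R A)"
    using ind_norm_ge[OF N u, of "mat 1 + h *\<^sub>R A"] by (simp add: mat_one_plus_apply)
  finally show ?thesis unfolding measure_quotient_def using h by (simp add: field_simps)
qed

lemma matrix_measure_tendsto:
  fixes N :: "real^'n \<Rightarrow> real"
  assumes N: "is_vnorm N"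
  shows "(measure_quotient N A \<longlongrightarrow> matrix_measure N A) (at_right 0)"
proof -
  let ?q = "measure_quotient N A"
  define L where "L = Inf (?q ` {0<..})"
  have bdd: "bdd_below (?q ` {0<..})"
    using measure_quotient_lower[OF N] by (auto intro!: bdd_belowI)
  have lim: "(?q \<longlongrightarrow> L) (at_right 0)"
  proof (rule order_tendstoI)
    fix a assume "a < L"
    have "L \<le> ?q h" if "h > 0" for h
      unfolding L_def using bdd that by (intro cInf_lower) auto
    then show "eventually (\<lambda>h. a < ?q h) (at_right 0)"
      using eventually_at_right_less \<open>a < L\<close> by (force elim: eventually_mono)
  next
    fix a assume "L < a"
    obtain h1 where h1: "h1 > 0" "?q h1 < a"
      using cInf_lessD[of "?q ` {0<..}" a] \<open>L < a\<close> unfolding L_def by auto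
    have "eventually (\<lambda>h. 0 < h \<and> h < h1) (at_right 0)"
      using h1(1) unfolding eventually_at_right_field by auto
    then show "eventually (\<lambda>h. ?q h < a) (at_right 0)"
    proof eventually_elim
      case (elim h)
      then show ?case using measure_quotient_mono[OF N, of h h1 A] h1(2) by simp
    qed
  qed
  have "matrix_measure N A = L"
    using lim unfolding matrix_measure_def measure_quotient_def[abs_def]
    by (intro tendsto_Lim) simp_all
  then show ?thesis using lim by simp
qed

lemma matrix_measure_step:
  fixes N :: "real^'n \<Rightarrow> real" and A :: "real^'n^'n"
  assumes N: "is_vnorm N" and mm: "matrix_measure N A \<le> - lam" and eps: "\<epsilon> > 0"
  shows "eventually (\<lambda>h. \<forall>v. N (v + h *\<^sub>R (A *v v)) \<le> (1 - h*lam + h*\<epsilon>) * N v) (at_right 0)"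
proof -
  have "eventually (\<lambda>h. measure_quotient N A h < - lam + \<epsilon>) (at_right 0)"
    using order_tendstoD(2)[OF matrix_measure_tendsto[OF N]] mm eps by simp
  then show ?thesis
    using eventually_at_right_less
  proof eventually_elim
    case (elim h)
    then have ind: "ind_norm N (mat 1 + h *\<^sub>R A) \<le> 1 - h * lam + h * \<epsilon>"
      unfolding measure_quotient_def by (simp add: field_simps)
    show ?case
    proof
      fix v
      have "N (v + h *\<^sub>R (A *v v)) \<le> ind_norm N (mat 1 + h *\<^sub>R A) * N v"
        using ind_norm_apply[OF N, of "mat 1 + h *\<^sub>R A" v] by (simp add: mat_one_plus_apply)
      also have "\<dots> \<le> (1 - h * lam + h * \<epsilon>) * N v"
        using ind vnorm_nonneg[OF N] by (rule mult_right_mono)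
      finally show "N (v + h *\<^sub>R (A *v v)) \<le> (1 - h * lam + h * \<epsilon>) * N v" .
    qed
  qed
qed

section \<open>A Dini-derivative comparison principle\<close>

text \<open>The proof is the usual supremum argument, applied to \<phi> - c(t - a) for
  arbitrarily small slopes c.\<close>

lemma dini_nonincreasing:
  fixes \<phi> :: "real \<Rightarrow> real"
  assumes ab: "a \<le> b" and cont: "continuous_on {a..b} \<phi>"
    and D: "\<And>t e. a \<le> t \<Longrightarrow> t < b \<Longrightarrow> e > 0 \<Longrightarrow>
               eventually (\<lambda>h. \<phi> (t + h) \<le> \<phi> t + e * h) (at_right 0)"
  shows "\<phi> b \<le> \<phi> a"
proof (rule field_le_epsilon)
  fix e :: real assume e: "e > 0"
  define c where "c = e / (b - a + 1)"
  have c: "c > 0" using e ab by (simp add: c_def)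
  define S where "S = {t \<in> {a..b}. \<phi> t \<le> \<phi> a + c * (t - a)}"
  have clS: "closed S" unfolding S_def
    by (intro continuous_on_closed_Collect_le cont continuous_intros)
  have aS: "a \<in> S" unfolding S_def using ab by simp
  have bdd: "bdd_above S" unfolding S_def by (auto intro!: bdd_aboveI[of _ b])
  define \<sigma> where "\<sigma> = Sup S"
  have \<sigma>S: "\<sigma> \<in> S" unfolding \<sigma>_def using closed_contains_Sup[OF _ bdd clS] aS by blast
  have "\<sigma> = b"
  proof (rule ccontr)
    assume "\<sigma> \<noteq> b"
    then have \<sigma>b: "\<sigma> < b" and a\<sigma>: "a \<le> \<sigma>" using \<sigma>S unfolding S_def by auto
    have "eventually (\<lambda>h. \<phi> (\<sigma> + h) \<le> \<phi> \<sigma> + c * h \<and> 0 < h \<and> h < b - \<sigma>) (at_right 0)"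
      using D[OF a\<sigma> \<sigma>b c] \<sigma>b
      by (intro eventually_conj) (auto simp: eventually_at_right_field intro: exI[of _ "b - \<sigma>"])
    then obtain h where h: "\<phi> (\<sigma> + h) \<le> \<phi> \<sigma> + c * h" "0 < h" "h < b - \<sigma>"
      using eventually_happens'[of "at_right (0::real)"] by force
    have "\<phi> \<sigma> \<le> \<phi> a + c * (\<sigma> - a)" using \<sigma>S unfolding S_def by auto
    then have "\<sigma> + h \<in> S" unfolding S_def using h a\<sigma> by (auto simp: algebra_simps)
    then have "\<sigma> + h \<le> \<sigma>" unfolding \<sigma>_def by (rule cSup_upper[OF _ bdd])
    then show False using h by simp
  qed
  then have "\<phi> b \<le> \<phi> a + c * (b - a)" using \<sigma>S unfolding S_def by simp
  also have "c * (b - a) \<le> e"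
    unfolding c_def using e ab by (simp add: field_simps)
  finally show "\<phi> b \<le> \<phi> a + e" by simp
qed

locale dini_decay =
  fixes \<phi> :: "real \<Rightarrow> real" and t0 lam :: real
  assumes cont: "continuous_on {t0..} \<phi>"
    and nonneg: "\<And>t. \<phi> t \<ge> 0"
    and rate: "lam > 0"
    and dini: "\<And>t \<epsilon>. t \<ge> t0 \<Longrightarrow> \<epsilon> > 0 \<Longrightarrow>
                 eventually (\<lambda>h. \<phi> (t + h) \<le> (1 - h * lam) * \<phi> t + h * \<epsilon>) (at_right 0)"
begin

lemma nonincreasing:
  assumes "t0 \<le> t1" "t1 \<le> t2"
  shows "\<phi> t2 \<le> \<phi> t1"
proof (rule dini_nonincreasing[OF assms(2)])
  show "continuous_on {t1..t2} \<phi>" by (rule continuous_on_subset[OF cont]) (use assms in auto)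
  fix t \<epsilon> :: real assume t: "t1 \<le> t" and \<epsilon>: "\<epsilon> > 0"
  have t0t: "t0 \<le> t" using t assms(1) by simp
  show "eventually (\<lambda>h. \<phi> (t + h) \<le> \<phi> t + \<epsilon> * h) (at_right 0)"
    using dini[OF t0t \<epsilon>] eventually_at_right_less
  proof eventually_elim
    case (elim h)
    have "h * lam * \<phi> t \<ge> 0" using elim(2) rate nonneg[of t] by simp
    then show ?case using elim(1) by (simp add: algebra_simps)
  qed
qed

text \<open>As long as \<phi> \<ge> \<epsilon>, the function \<phi> decreases at least at the rate \<lambda>\<epsilon>/2; hence \<phi> must
  drop below \<epsilon>.\<close>

lemma eventually_below:
  assumes \<epsilon>: "\<epsilon> > 0"
  shows "\<exists>T\<ge>t0. \<phi> T < \<epsilon>"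
proof (rule ccontr)
  assume "\<not> ?thesis"
  then have big: "\<And>t. t \<ge> t0 \<Longrightarrow> \<phi> t \<ge> \<epsilon>" by (meson not_le)
  define c where "c = lam * \<epsilon> / 2"
  have c: "c > 0" unfolding c_def using rate \<epsilon> by simp
  define \<psi> where "\<psi> t = \<phi> t + c * t" for t
  define T where "T = t0 + \<phi> t0 / c + 1"
  have T: "T \<ge> t0" unfolding T_def using nonneg[of t0] c by simp
  have "\<psi> T \<le> \<psi> t0"
  proof (rule dini_nonincreasing[OF T])
    show "continuous_on {t0..T} \<psi>" unfolding \<psi>_def[abs_def]
      by (intro continuous_intros continuous_on_subset[OF cont]) auto
    fix t e :: real assume t: "t0 \<le> t" and e: "e > 0"
    show "eventually (\<lambda>h. \<psi> (t + h) \<le> \<psi> t + e * h) (at_right 0)"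
      using dini[OF t e] eventually_at_right_less
    proof eventually_elim
      case (elim h)
      have "h * lam * \<epsilon> \<le> h * lam * \<phi> t" using big[OF t] elim(2) rate by simp
      moreover have "2 * (c * h) = h * lam * \<epsilon>" unfolding c_def by simp
      moreover have "h * lam * \<epsilon> \<ge> 0" using elim(2) rate \<epsilon> by simp
      moreover have "\<phi> (t + h) \<le> \<phi> t - h * lam * \<phi> t + e * h"
        using elim(1) by (simp add: algebra_simps)
      moreover have "\<psi> (t + h) = \<phi> (t + h) + c * t + c * h" "\<psi> t = \<phi> t + c * t"
        unfolding \<psi>_def by (simp_all add: algebra_simps)
      ultimately show ?case by linarith
    qed
  qed
  then have "\<phi> T \<le> \<phi> t0 - c * (T - t0)" unfolding \<psi>_def by (simp add: algebra_simps)
  also have "c * (T - t0) = \<phi> t0 + c" unfolding T_def using c by (simp add: algebra_simps)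
  finally show False using nonneg[of T] c by simp
qed

theorem tendsto_zero: "(\<phi> \<longlongrightarrow> 0) at_top"
proof (rule order_tendstoI)
  fix a :: real assume "a < 0"
  then show "eventually (\<lambda>t. a < \<phi> t) at_top"
    using nonneg by (intro always_eventually allI) (rule less_le_trans)
next
  fix a :: real assume "0 < a"
  then obtain T where "T \<ge> t0" "\<phi> T < a" using eventually_below by blast
  then show "eventually (\<lambda>t. \<phi> t < a) at_top"
    unfolding eventually_at_top_linorder using nonincreasing by (meson le_less_trans)
qed

end

section \<open>Jacobians of a C^1 vector field\<close>

definition has_C1_derivative ::
    "(real^'n \<Rightarrow> real \<Rightarrow> real^'n) \<Rightarrow> ((real^'n) \<times> real \<Rightarrow> (((real^'n) \<times> real) \<Rightarrow>\<^sub>L (real^'n))) \<Rightarrow> bool"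
  where "has_C1_derivative f D \<longleftrightarrow>
    (\<forall>p \<in> UNIV \<times> {0..}. ((\<lambda>q. f (fst q) (snd q)) has_derivative blinfun_apply (D p))
                              (at p within UNIV \<times> {0..})) \<and>
    continuous_on (UNIV \<times> {0..}) D"

lemma C1_fieldE:
  assumes "C1_field f"
  obtains D where "has_C1_derivative f D"
  using assms unfolding C1_field_def has_C1_derivative_def by blast

lemma has_C1_derivative_partial:
  assumes D: "has_C1_derivative f D" and t: "t \<ge> 0"
  shows "((\<lambda>y. f y t) has_derivative (\<lambda>v. D (u, t) (v, 0))) (at u)"
proof -
  have pair: "((\<lambda>y. (y, t)) has_derivative (\<lambda>v. (v, 0))) (at u)"
    by (auto intro!: derivative_eq_intros)
  have "((\<lambda>y. (\<lambda>q. f (fst q) (snd q)) (y, t)) has_derivative (\<lambda>v. D (u, t) (v, 0))) (at u)"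
    by (rule has_derivative_in_compose2[of "UNIV \<times> {0..}" _ "\<lambda>p. blinfun_apply (D p)", OF _ _ _ pair])
       (use D t in \<open>auto simp: has_C1_derivative_def\<close>)
  then show ?thesis by simp
qed

lemma jac_apply:
  assumes D: "has_C1_derivative f D" and t: "t \<ge> 0"
  shows "jac f u t *v v = D (u, t) (v, 0)"
proof -
  have hd: "((\<lambda>y. f y t) has_derivative (\<lambda>v. D (u, t) (v, 0))) (at u)"
    by (rule has_C1_derivative_partial[OF D t])
  then have "frechet_derivative (\<lambda>y. f y t) (at u) = (\<lambda>v. D (u, t) (v, 0))"
    by (rule frechet_derivative_at[symmetric])
  moreover have "bounded_linear (\<lambda>v. D (u, t) (v, 0))"
    using hd by (rule has_derivative_bounded_linear)
  ultimately show ?thesis unfolding jac_def by (metis matrix_vector_mul(3))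
qed

lemma jacobian_linearization:
  fixes f :: "real^'n \<Rightarrow> real \<Rightarrow> real^'n"
  assumes D: "has_C1_derivative f D" and t: "t \<ge> 0"
    and seg: "\<And>u. u \<in> {0..1} \<Longrightarrow> p + u *\<^sub>R (q - p) \<in> S" and p: "p \<in> S"
    and close: "\<And>x. x \<in> S \<Longrightarrow> norm (D (x, t) - D (p, t)) \<le> \<eta>"
  shows "norm (f q t - f p t - jac f p t *v (q - p)) \<le> norm (q - p) * \<eta>"
proof -
  have deriv: "((\<lambda>y. f y t) has_derivative (\<lambda>v. D (x, t) (v, 0))) (at x within S)" for x
    by (rule has_derivative_at_withinI[OF has_C1_derivative_partial[OF D t]])
  have bound: "onorm ((\<lambda>v. D (x, t) (v, 0)) - (\<lambda>v. D (p, t) (v, 0))) \<le> \<eta>" if "x \<in> S" for x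
  proof (rule onorm_le)
    fix v :: "real^'n"
    have "norm (((\<lambda>v. D (x, t) (v, 0)) - (\<lambda>v. D (p, t) (v, 0))) v) = norm ((D (x, t) - D (p, t)) (v, 0))"
      by (simp add: blinfun.diff_left)
    also have "\<dots> \<le> norm (D (x, t) - D (p, t)) * norm (v, 0::real)" by (rule norm_blinfun)
    also have "\<dots> \<le> \<eta> * norm v" using close[OF that] by (simp add: mult_right_mono)
    finally show "norm (((\<lambda>v. D (x, t) (v, 0)) - (\<lambda>v. D (p, t) (v, 0))) v) \<le> \<eta> * norm v" .
  qed
  have "norm (f q t - f p t - D (p, t) (q - p, 0)) \<le> norm (q - p) * \<eta>"
    by (rule differentiable_bound_linearization[where f="\<lambda>y. f y t" and f'="\<lambda>x v. D (x, t) (v, 0)",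
          OF seg deriv bound p])
  then show ?thesis by (simp only: jac_apply[OF D t])
qed

text \<open>Uniform continuity of D on the segment [b,a] yields a partition of the segment into m
  equal pieces on each of which the Jacobian at the left end point linearises f.\<close>

lemma segment_linearization:
  fixes f :: "real^'n \<Rightarrow> real \<Rightarrow> real^'n" and a b :: "real^'n"
  assumes D: "has_C1_derivative f D" and t: "t \<ge> 0" and \<eta>: "\<eta> > 0"
  obtains m :: nat where "m > 0" and
    "\<And>k. k < m \<Longrightarrow>
       norm (f (b + (real (Suc k) / m) *\<^sub>R (a - b)) t - f (b + (real k / m) *\<^sub>R (a - b)) t
             - jac f (b + (real k / m) *\<^sub>R (a - b)) t *v ((1 / m) *\<^sub>R (a - b)))
       \<le> norm (a - b) / m * \<eta>"
proof -
  define z where "z \<sigma> = b + \<sigma> *\<^sub>R (a - b)" for \<sigma> :: real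
  have cont: "continuous_on (UNIV \<times> {0..}) D" using D unfolding has_C1_derivative_def by blast
  have "continuous_on {0..1} (\<lambda>\<sigma>. D (z \<sigma>, t))"
    by (rule continuous_on_compose2[OF cont]) (auto intro!: continuous_intros simp: z_def t)
  then have "uniformly_continuous_on {0..1} (\<lambda>\<sigma>. D (z \<sigma>, t))"
    by (rule compact_uniformly_continuous[OF _ compact_Icc])
  then obtain \<delta> where \<delta>: "\<delta> > 0" and uc: "\<And>\<sigma> \<sigma>'. \<sigma> \<in> {0..1} \<Longrightarrow> \<sigma>' \<in> {0..1} \<Longrightarrow>
      dist \<sigma>' \<sigma> < \<delta> \<Longrightarrow> dist (D (z \<sigma>', t)) (D (z \<sigma>, t)) < \<eta>"
    unfolding uniformly_continuous_on_def using \<eta> by metis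
  have piece: "norm (f (z \<sigma>1) t - f (z \<sigma>0) t - jac f (z \<sigma>0) t *v (z \<sigma>1 - z \<sigma>0)) \<le> norm (z \<sigma>1 - z \<sigma>0) * \<eta>"
    if \<sigma>: "0 \<le> \<sigma>0" "\<sigma>0 \<le> \<sigma>1" "\<sigma>1 \<le> 1" "\<sigma>1 - \<sigma>0 < \<delta>" for \<sigma>0 \<sigma>1
  proof (rule jacobian_linearization[OF D t, where S = "z ` {\<sigma>0..\<sigma>1}"])
    fix u :: real assume u: "u \<in> {0..1}"
    have "z \<sigma>0 + u *\<^sub>R (z \<sigma>1 - z \<sigma>0) = z (\<sigma>0 + u * (\<sigma>1 - \<sigma>0))"
      unfolding z_def by (simp add: algebra_simps)
    moreover have "\<sigma>0 + u * (\<sigma>1 - \<sigma>0) \<in> {\<sigma>0..\<sigma>1}"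
      using u \<sigma> mult_left_le_one_le[of "\<sigma>1 - \<sigma>0" u] by auto
    ultimately show "z \<sigma>0 + u *\<^sub>R (z \<sigma>1 - z \<sigma>0) \<in> z ` {\<sigma>0..\<sigma>1}" by simp
  next
    show "z \<sigma>0 \<in> z ` {\<sigma>0..\<sigma>1}" using \<sigma> by auto
  next
    fix x assume "x \<in> z ` {\<sigma>0..\<sigma>1}"
    then obtain \<sigma>' where "\<sigma>' \<in> {\<sigma>0..\<sigma>1}" "x = z \<sigma>'" by blast
    then have "dist (D (x, t)) (D (z \<sigma>0, t)) < \<eta>"
      using uc[of \<sigma>0 \<sigma>'] \<sigma> by (auto simp: dist_real_def)
    then show "norm (D (x, t) - D (z \<sigma>0, t)) \<le> \<eta>" by (simp add: dist_norm)
  qed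
  obtain m :: nat where m: "1 / \<delta> < m" using reals_Archimedean2 by blast
  then have m0: "real m > 0" using \<delta> by (smt (verit) divide_pos_pos)
  have m\<delta>: "1 / real m < \<delta>" using m \<delta> m0 by (simp add: field_simps)
  show ?thesis
  proof
    show "m > 0" using m0 by simp
    fix k assume k: "k < m"
    have "z (real (Suc k) / m) - z (real k / m) = (1 / m) *\<^sub>R (a - b)"
      unfolding z_def by (simp add: algebra_simps add_divide_distrib scaleR_add_left)
    moreover have "0 \<le> real k / m" "real k / m \<le> real (Suc k) / m" "real (Suc k) / m \<le> 1"
      using k m0 by (simp_all add: divide_right_mono field_simps)
    moreover have "real (Suc k) / m - real k / m < \<delta>" using m\<delta> by (simp add: diff_divide_distrib[symmetric])
    ultimately show "norm (f (b + (real (Suc k) / m) *\<^sub>R (a - b)) t - f (b + (real k / m) *\<^sub>R (a - b)) t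
             - jac f (b + (real k / m) *\<^sub>R (a - b)) t *v ((1 / m) *\<^sub>R (a - b)))
       \<le> norm (a - b) / m * \<eta>"
      using piece[of "real k / m" "real (Suc k) / m"] m0 unfolding z_def by simp
  qed
qed

section \<open>Contracting systems: any two solutions converge to each other\<close>

text \<open>Combining the one-step bound for the Jacobians with the linearisation along the segment
  [b,a]: for small h, the map v \<mapsto> v + h(f(b+v,t) - f(b,t)) contracts N at rate \<lambda>, up to an
  error \<epsilon>h that is relative to the size of a - b.\<close>

lemma field_difference_step:
  fixes f :: "real^'n \<Rightarrow> real \<Rightarrow> real^'n" and N :: "real^'n \<Rightarrow> real"
  assumes N: "is_vnorm N" and D: "has_C1_derivative f D"
    and mm: "\<And>x. matrix_measure N (jac f x t) \<le> - lam" and t: "t \<ge> 0" and \<epsilon>: "\<epsilon> > 0"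
  shows "eventually (\<lambda>h. N ((a - b) + h *\<^sub>R (f a t - f b t))
           \<le> (1 - h*lam + h*\<epsilon>) * N (a - b) + h * (\<epsilon> * norm (a - b))) (at_right 0)"
proof -
  obtain K where K: "K > 0" "\<And>x. N x \<le> K * norm x" using vnorm_le_norm[OF N] by blast
  obtain m :: nat where m: "m > 0" and lin: "\<And>k. k < m \<Longrightarrow>
       norm (f (b + (real (Suc k) / m) *\<^sub>R (a - b)) t - f (b + (real k / m) *\<^sub>R (a - b)) t
             - jac f (b + (real k / m) *\<^sub>R (a - b)) t *v ((1 / m) *\<^sub>R (a - b)))
       \<le> norm (a - b) / m * (\<epsilon> / K)"
    using segment_linearization[OF D t, where \<eta> = "\<epsilon> / K"] \<epsilon> K(1) by auto
  define z where "z k = b + (real k / m) *\<^sub>R (a - b)" for k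
  define d where "d = (1 / m) *\<^sub>R (a - b)"
  define J where "J k = jac f (z k) t" for k
  define r where "r k = f (z (Suc k)) t - f (z k) t - J k *v d" for k
  have Nr: "N (r k) \<le> \<epsilon> * norm (a - b) / m" if "k < m" for k
  proof -
    have "N (r k) \<le> K * (norm (a - b) / m * (\<epsilon> / K))"
      using K(2)[of "r k"] lin[OF that] K(1) unfolding r_def J_def z_def d_def
      by (smt (verit) mult_left_mono)
    then show ?thesis using K(1) by (simp add: mult.commute)
  qed
  have "(\<Sum>k<m. d) = real m *\<^sub>R d" by (metis card_lessThan sum_constant_scaleR)
  also have "\<dots> = a - b" using m by (simp add: d_def)
  finally have sum_d: "(\<Sum>k<m. d) = a - b" .
  have sum_f: "(\<Sum>k<m. J k *v d + r k) = f a t - f b t"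
    using sum_lessThan_telescope[of "\<lambda>k. f (z k) t" m] m by (simp add: r_def z_def)
  have decomp: "(a - b) + h *\<^sub>R (f a t - f b t) = (\<Sum>k<m. (d + h *\<^sub>R (J k *v d)) + h *\<^sub>R r k)"
    for h
  proof -
    have "(\<Sum>k<m. (d + h *\<^sub>R (J k *v d)) + h *\<^sub>R r k)
        = (\<Sum>k<m. d) + h *\<^sub>R (\<Sum>k<m. J k *v d + r k)"
      by (simp add: sum.distrib scaleR_sum_right scaleR_add_right add.assoc)
    then show ?thesis unfolding sum_d sum_f by simp
  qed
  have "eventually (\<lambda>h. \<forall>k\<in>{..<m}. \<forall>v. N (v + h *\<^sub>R (J k *v v)) \<le> (1 - h*lam + h*\<epsilon>) * N v)
          (at_right 0)"
    unfolding J_def using matrix_measure_step[OF N mm \<epsilon>] by (intro eventually_ball_finite) auto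
  then show ?thesis
    using eventually_at_right_less
  proof eventually_elim
    case (elim h)
    have "N ((a - b) + h *\<^sub>R (f a t - f b t)) \<le> (\<Sum>k<m. N ((d + h *\<^sub>R (J k *v d)) + h *\<^sub>R r k))"
      unfolding decomp by (rule vnorm_sum[OF N])
    also have "\<dots> \<le> (\<Sum>k<m. (1 - h*lam + h*\<epsilon>) * N d + h * (\<epsilon> * norm (a - b) / m))"
    proof (rule sum_mono)
      fix k assume k: "k \<in> {..<m}"
      have "N ((d + h *\<^sub>R (J k *v d)) + h *\<^sub>R r k) \<le> N (d + h *\<^sub>R (J k *v d)) + h * N (r k)"
        using vnorm_triangle[OF N, of "d + h *\<^sub>R (J k *v d)" "h *\<^sub>R r k"]
          vnorm_scaleR[OF N, of h "r k"] elim(2) by simp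
      then show "N ((d + h *\<^sub>R (J k *v d)) + h *\<^sub>R r k) \<le> (1 - h*lam + h*\<epsilon>) * N d + h * (\<epsilon> * norm (a - b) / m)"
        using elim(1) k Nr[of k] elim(2) by (smt (verit) lessThan_iff mult_left_mono)
    qed
    also have "\<dots> = (1 - h*lam + h*\<epsilon>) * N (a - b) + h * (\<epsilon> * norm (a - b))"
      using m by (simp add: d_def vnorm_scaleR[OF N] distrib_left)
    finally show ?case .
  qed
qed

lemma solution_continuous:
  assumes "is_solution f t0 x"
  shows "continuous_on {t0..} x"
  using assms unfolding is_solution_def continuous_on_eq_continuous_within
  by (blast intro: has_vector_derivative_continuous)

lemma solution_difference_dini:
  fixes f :: "real^'n \<Rightarrow> real \<Rightarrow> real^'n" and N :: "real^'n \<Rightarrow> real"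
  assumes N: "is_vnorm N" and D: "has_C1_derivative f D"
    and mm: "\<And>x t. t \<ge> 0 \<Longrightarrow> matrix_measure N (jac f x t) \<le> - lam"
    and t0: "t0 \<ge> 0" and sx: "is_solution f t0 x" and sy: "is_solution f t0 y"
    and t: "t \<ge> t0" and \<epsilon>: "\<epsilon> > 0"
  shows "eventually (\<lambda>h. N (x (t + h) - y (t + h)) \<le> (1 - h * lam) * N (x t - y t) + h * \<epsilon>)
           (at_right 0)"
proof -
  obtain K where K: "K > 0" "\<And>x. N x \<le> K * norm x" using vnorm_le_norm[OF N] by blast
  define e where "e u = x u - y u" for u
  define e' where "e' = f (x t) t - f (y t) t"
  have "((\<lambda>u. x u - y u) has_vector_derivative e') (at t within {t0..})"
    using sx sy t unfolding is_solution_def e'_def by (blast intro: has_vector_derivative_diff)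
  then have "(e has_derivative (\<lambda>u. u *\<^sub>R e')) (at t within {t0..})"
    unfolding has_vector_derivative_def e_def .
  moreover have \<rho>: "\<epsilon> / (2 * K) > 0" using \<epsilon> K by simp
  ultimately obtain \<delta> where \<delta>: "\<delta> > 0" and rem: "\<And>u. u \<in> {t0..} \<Longrightarrow> norm (u - t) < \<delta> \<Longrightarrow>
      norm (e u - e t - (u - t) *\<^sub>R e') \<le> \<epsilon> / (2 * K) * norm (u - t)"
    unfolding has_derivative_within_alt by blast
  define \<epsilon>' where "\<epsilon>' = \<epsilon> / (2 * (N (e t) + norm (e t) + 1))"
  define P where "P = N (e t) + norm (e t)"
  have P: "P \<ge> 0" unfolding P_def using vnorm_nonneg[OF N, of "e t"] norm_ge_zero[of "e t"] by linarith
  then have \<epsilon>'_pos: "\<epsilon>' > 0" using \<epsilon> unfolding \<epsilon>'_def P_def[symmetric] by simp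
  have "\<epsilon>' * N (e t) + \<epsilon>' * norm (e t) = \<epsilon>' * P" by (simp add: P_def distrib_left)
  also have "\<dots> = \<epsilon> / 2 * (P / (P + 1))" unfolding \<epsilon>'_def P_def[symmetric] by simp
  also have "\<dots> \<le> \<epsilon> / 2"
    using P \<epsilon> by (intro mult_left_le) simp_all
  finally have \<epsilon>'_small: "\<epsilon>' * N (e t) + \<epsilon>' * norm (e t) \<le> \<epsilon> / 2" .
  have "eventually (\<lambda>h. N (e t + h *\<^sub>R e')
          \<le> (1 - h*lam + h*\<epsilon>') * N (e t) + h * (\<epsilon>' * norm (e t))) (at_right 0)"
    unfolding e_def e'_def using t t0 mm
    by (intro field_difference_step[OF N D _ _ \<epsilon>'_pos]) simp_all
  moreover have "eventually (\<lambda>h. 0 < h \<and> h < \<delta>) (at_right 0)"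
    using \<delta> unfolding eventually_at_right_field by auto
  ultimately show ?thesis
  proof eventually_elim
    case (elim h)
    have "N (e (t + h) - e t - h *\<^sub>R e') \<le> K * (\<epsilon> / (2 * K) * h)"
      using K(2)[of "e (t + h) - e t - h *\<^sub>R e'"] rem[of "t + h"] K(1) elim(2) t
      by (smt (verit) atLeast_iff mult_left_mono norm_of_real real_norm_def add_diff_cancel_left')
    then have "N (e (t + h)) \<le> N (e t + h *\<^sub>R e') + h * (\<epsilon> / 2)"
      using vnorm_triangle[OF N, of "e t + h *\<^sub>R e'" "e (t + h) - e t - h *\<^sub>R e'"] K(1)
      by (simp add: field_simps)
    moreover have "h * (\<epsilon>' * N (e t)) + h * (\<epsilon>' * norm (e t)) \<le> h * (\<epsilon> / 2)"
      using mult_left_mono[OF \<epsilon>'_small, of h] elim(2) by (simp add: distrib_left)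
    ultimately show ?case using elim(1) unfolding e_def by (simp add: algebra_simps)
  qed
qed

text \<open>Main consequence of contraction: \<phi> is nonnegative, continuous and satisfies the Dini
  inequality, so it tends to 0, and N dominates the Euclidean norm up to a constant.\<close>

theorem contracting_solutions_converge:
  fixes f :: "real^'n \<Rightarrow> real \<Rightarrow> real^'n"
  assumes smooth: "C1_field f" and contr: "contracting f"
    and t0: "t0 \<ge> 0" and sx: "is_solution f t0 x" and sy: "is_solution f t0 y"
  shows "((\<lambda>t. x t - y t) \<longlongrightarrow> 0) at_top"
proof -
  obtain D where D: "has_C1_derivative f D" using smooth by (rule C1_fieldE)
  obtain N lam where N: "is_vnorm N" and lam: "lam > 0"
    and mm: "\<And>x t. t \<ge> 0 \<Longrightarrow> matrix_measure N (jac f x t) \<le> - lam"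
    using contr unfolding contracting_def by blast
  obtain k where k: "k > 0" "\<And>x. k * norm x \<le> N x" using norm_le_vnorm[OF N] by blast
  have cont: "continuous_on {t0..} (\<lambda>t. N (x t - y t))"
    by (intro continuous_on_compose2[OF vnorm_continuous[OF N]] continuous_intros
          solution_continuous[OF sx] solution_continuous[OF sy]) auto
  interpret dini_decay "\<lambda>t. N (x t - y t)" t0 lam
    using cont vnorm_nonneg[OF N] lam solution_difference_dini[OF N D mm t0 sx sy]
    by unfold_locales auto
  have "eventually (\<lambda>t. norm (x t - y t) \<le> N (x t - y t) / k) at_top"
    using k by (auto simp: field_simps mult.commute)
  moreover have "((\<lambda>t. N (x t - y t) / k) \<longlongrightarrow> 0) at_top"
    using tendsto_divide_zero[OF tendsto_zero] .
  ultimately show ?thesis by (rule Lim_null_comparison)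
qed

section \<open>Distance to a common fixed space\<close>

text \<open>On the orthogonal complement of the common kernel K of finitely many matrices B_i, the
  seminorm z \<mapsto> \<Sum>_i |B_i z| is a norm, hence bounded below by a multiple of |z|
  (compactness of the unit sphere of the complement).\<close>

lemma common_kernel_coercive:
  fixes B :: "'i \<Rightarrow> real^'n^'n"
  assumes fin: "finite I"
  obtains e where "e > 0"
    "\<And>z. (\<forall>w\<in>{x. \<forall>i\<in>I. B i *v x = 0}. orthogonal w z) \<Longrightarrow> e * norm z \<le> (\<Sum>i\<in>I. norm (B i *v z))"
proof -
  define W where "W = {z. \<forall>w\<in>{x. \<forall>i\<in>I. B i *v x = 0}. orthogonal w z}"
  define \<rho> where "\<rho> z = (\<Sum>i\<in>I. norm (B i *v z))" for z
  have \<rho>_scale: "\<rho> (c *\<^sub>R z) = \<bar>c\<bar> * \<rho> z" for c z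
    unfolding \<rho>_def by (simp add: matrix_vector_mult_scaleR sum_distrib_left)
  have \<rho>_pos: "\<rho> z > 0" if "z \<in> W" "z \<noteq> 0" for z
  proof (rule ccontr)
    assume "\<not> \<rho> z > 0"
    then have "\<rho> z = 0" unfolding \<rho>_def by (meson norm_ge_zero not_less sum_nonneg order.antisym)
    then have "\<forall>i\<in>I. B i *v z = 0" using fin unfolding \<rho>_def by (simp add: sum_nonneg_eq_0_iff)
    then have "orthogonal z z" using \<open>z \<in> W\<close> unfolding W_def by blast
    then show False using \<open>z \<noteq> 0\<close> by (simp add: orthogonal_def)
  qed
  have W_scale: "c *\<^sub>R z \<in> W" if "z \<in> W" for c z
    using that unfolding W_def by (simp add: orthogonal_clauses)
  have "closed W"
    unfolding W_def by (intro closed_subspace subspace_orthogonal_to_vectors)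
  then have cpt: "compact (W \<inter> sphere 0 1)" by (intro closed_Int_compact compact_sphere)
  have cont: "continuous_on (W \<inter> sphere 0 1) \<rho>"
    unfolding \<rho>_def by (intro continuous_intros linear_continuous_on matrix_vector_mul_bounded_linear)
  show ?thesis
  proof (cases "W \<inter> sphere 0 1 = {}")
    case True
    have "z = 0" if "z \<in> W" for z
      using True W_scale[OF that, of "1 / norm z"] by (cases "z = 0") auto
    then show ?thesis using that[of 1] unfolding W_def by force
  next
    case False
    obtain m where m: "m \<in> W \<inter> sphere 0 1" "\<And>y. y \<in> W \<inter> sphere 0 1 \<Longrightarrow> \<rho> m \<le> \<rho> y"
      using continuous_attains_inf[OF cpt False cont] by blast
    have "\<rho> m * norm z \<le> \<rho> z" if "z \<in> W" for z
    proof (cases "z = 0")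
      case False
      have "\<rho> m \<le> \<rho> ((1 / norm z) *\<^sub>R z)" using m(2) W_scale[OF that] False by simp
      then show ?thesis using False by (simp add: \<rho>_scale field_simps)
    qed (simp add: \<rho>_def)
    moreover have "\<rho> m > 0" using m(1) by (intro \<rho>_pos) auto
    ultimately show ?thesis using that unfolding W_def \<rho>_def by blast
  qed
qed

lemma infdist_common_kernel_le:
  fixes B :: "'i \<Rightarrow> real^'n^'n"
  assumes fin: "finite I"
  obtains C where "\<And>x. infdist x {x. \<forall>i\<in>I. B i *v x = 0} \<le> C * (\<Sum>i\<in>I. norm (B i *v x))"
proof -
  define K where "K = {x::real^'n. \<forall>i\<in>I. B i *v x = 0}"
  obtain e where e: "e > 0"
    and coercive: "\<And>z. (\<forall>w\<in>K. orthogonal w z) \<Longrightarrow> e * norm z \<le> (\<Sum>i\<in>I. norm (B i *v z))"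
    using common_kernel_coercive[OF fin, where B = B] unfolding K_def by blast
  have "subspace K"
    unfolding subspace_def K_def by (auto simp: matrix_vector_right_distrib matrix_vector_mult_scaleR)
  then have spanK: "span K = K" by (simp add: span_eq_iff)
  have "infdist x K \<le> (1 / e) * (\<Sum>i\<in>I. norm (B i *v x))" for x
  proof -
    obtain y z where y: "y \<in> K" and z: "\<And>w. w \<in> K \<Longrightarrow> orthogonal z w" and xyz: "x = y + z"
      using orthogonal_subspace_decomp_exists[of K x] spanK by metis
    have "B i *v x = B i *v z" if "i \<in> I" for i
      using y that xyz unfolding K_def by (simp add: matrix_vector_right_distrib)
    then have "(\<Sum>i\<in>I. norm (B i *v z)) = (\<Sum>i\<in>I. norm (B i *v x))" by simp
    moreover have "e * norm z \<le> (\<Sum>i\<in>I. norm (B i *v z))"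
      using z by (intro coercive) (simp add: orthogonal_commute)
    moreover have "infdist x K \<le> norm z"
      using infdist_le[OF y, of x] xyz by (simp add: dist_norm)
    ultimately have "e * infdist x K \<le> (\<Sum>i\<in>I. norm (B i *v x))"
      using mult_left_mono[of "infdist x K" "norm z" e] e by linarith
    then show ?thesis using e by (simp add: field_simps)
  qed
  then show ?thesis using that unfolding K_def by blast
qed

corollary infdist_common_fix_space_le:
  fixes g :: "'i \<Rightarrow> real^'n^'n"
  assumes "finite I"
  obtains C where "\<And>x. infdist x (\<Inter>i\<in>I. fix_space (g i)) \<le> C * (\<Sum>i\<in>I. norm (x - g i *v x))"
proof -
  have residual: "(mat 1 - g i) *v x = x - g i *v x" for i x
    by (simp add: matrix_vector_mult_diff_rdistrib)
  have fix_eq: "(\<Inter>i\<in>I. fix_space (g i)) = {x. \<forall>i\<in>I. (mat 1 - g i) *v x = 0}"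
    unfolding fix_space_def residual by auto
  obtain C where C: "\<And>x. infdist x {x. \<forall>i\<in>I. (mat 1 - g i) *v x = 0}
      \<le> C * (\<Sum>i\<in>I. norm ((mat 1 - g i) *v x))"
    using infdist_common_kernel_le[OF assms, where B = "\<lambda>i. mat 1 - g i"] by blast
  show ?thesis
  proof (rule that)
    show "infdist x (\<Inter>i\<in>I. fix_space (g i)) \<le> C * (\<Sum>i\<in>I. norm (x - g i *v x))" for x
      using C[of x] unfolding fix_eq residual .
  qed
qed

section \<open>Symmetry of solutions\<close>

lemma equivariant_solution:
  assumes equiv: "equivariant f g" and t0: "t0 \<ge> 0" and sx: "is_solution f t0 x"
  shows "is_solution f t0 (\<lambda>t. g *v x t)"
  unfolding is_solution_def
proof (intro allI impI)
  fix t assume t: "t \<ge> t0"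
  have "((\<lambda>t. g *v x t) has_vector_derivative g *v f (x t) t) (at t within {t0..})"
    using sx t unfolding is_solution_def
    by (intro bounded_linear.has_vector_derivative[OF matrix_vector_mul_bounded_linear]) blast
  moreover have "g *v f (x t) t = f (g *v x t) t"
    using equiv t t0 unfolding equivariant_def by auto
  ultimately show "((\<lambda>t. g *v x t) has_vector_derivative f (g *v x t) t) (at t within {t0..})"
    by simp
qed

lemma fix_residual_le_infdist:
  fixes g :: "real^'n^'n"
  obtains c where "c \<ge> 0" "\<And>x. norm (x - g *v x) \<le> c * infdist x (fix_space g)"
proof -
  obtain c where c: "c > 0" "\<And>v. norm ((mat 1 - g) *v v) \<le> norm v * c"
    using bounded_linear.pos_bounded[OF matrix_vector_mul_bounded_linear] by blast
  have "closed (fix_space g)" unfolding fix_space_def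
    by (intro closed_Collect_eq linear_continuous_on matrix_vector_mul_bounded_linear continuous_on_id)
  moreover have "fix_space g \<noteq> {}" unfolding fix_space_def by (auto intro!: exI[of _ 0])
  ultimately have "norm (x - g *v x) \<le> c * infdist x (fix_space g)" for x
  proof -
    obtain m where m: "m \<in> fix_space g" "infdist x (fix_space g) = dist x m"
      using infdist_attains_inf[OF \<open>closed (fix_space g)\<close> \<open>fix_space g \<noteq> {}\<close>] by blast
    have "x - g *v x = (mat 1 - g) *v (x - m)"
      using m(1) unfolding fix_space_def
      by (simp add: matrix_vector_mult_diff_rdistrib matrix_vector_right_distrib algebra_simps)
    then show ?thesis using c(2)[of "x - m"] m(2) by (simp add: dist_norm mult.commute)
  qed
  then show ?thesis using c(1) that by (meson less_imp_le)
qed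

lemma towards_fix_space_residual:
  assumes towards: "contracting_towards f (fix_space g)"
    and t0: "t0 \<ge> 0" and sx: "is_solution f t0 x"
  shows "((\<lambda>t. x t - g *v x t) \<longlongrightarrow> 0) at_top"
proof -
  obtain C lam where lam: "lam > 0"
    and decay: "\<And>t. t \<ge> t0 \<Longrightarrow> infdist (x t) (fix_space g) \<le> C * exp (- lam * (t - t0))"
    using towards t0 sx unfolding contracting_towards_def by blast
  obtain c where c: "c \<ge> 0" "\<And>x. norm (x - g *v x) \<le> c * infdist x (fix_space g)"
    using fix_residual_le_infdist[where g = g] by blast
  have "eventually (\<lambda>t. norm (x t - g *v x t) \<le> c * (C * exp (- lam * (t - t0)))) at_top"
    unfolding eventually_at_top_linorder
  proof (intro exI[of _ t0] allI impI)
    fix t assume "t \<ge> t0"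
    then have "c * infdist (x t) (fix_space g) \<le> c * (C * exp (- lam * (t - t0)))"
      using decay c(1) by (intro mult_left_mono)
    then show "norm (x t - g *v x t) \<le> c * (C * exp (- lam * (t - t0)))"
      using c(2)[of "x t"] by linarith
  qed
  moreover have "((\<lambda>t. c * (C * exp (- lam * (t - t0)))) \<longlongrightarrow> 0) at_top"
    using lam by real_asymp
  ultimately show ?thesis by (rule Lim_null_comparison)
qed

theorem theorem8:
  fixes f :: "real^'n \<Rightarrow> real \<Rightarrow> real^'n"
    and \<gamma> :: "nat \<Rightarrow> real^'n^'n"
    and s :: nat
  assumes smooth: "C1_field f"
    and equiv: "\<forall>i \<in> {1..s}. equivariant f (\<gamma> i)"
    and nontriv: "(\<Inter>i \<in> {1..s}. fix_space (\<gamma> i)) \<noteq> {0}"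
    and contr: "(\<forall>i \<in> {1..s}. contracting_towards f (fix_space (\<gamma> i))) \<or> contracting f"
  shows "\<forall>t0 x. t0 \<ge> 0 \<longrightarrow> is_solution f t0 x \<longrightarrow>
           ((\<lambda>t. infdist (x t) (\<Inter>i \<in> {1..s}. fix_space (\<gamma> i))) \<longlongrightarrow> 0) at_top"
proof (intro allI impI)
  fix t0 :: real and x :: "real \<Rightarrow> real^'n"
  assume t0: "t0 \<ge> 0" and sx: "is_solution f t0 x"
  have residual: "((\<lambda>t. x t - \<gamma> i *v x t) \<longlongrightarrow> 0) at_top" if i: "i \<in> {1..s}" for i
    using contr
  proof
    assume "\<forall>i \<in> {1..s}. contracting_towards f (fix_space (\<gamma> i))"
    then show ?thesis using towards_fix_space_residual[OF _ t0 sx] i by blast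
  next
    assume "contracting f"
    moreover have "is_solution f t0 (\<lambda>t. \<gamma> i *v x t)"
      using equiv i by (intro equivariant_solution[OF _ t0 sx]) blast
    ultimately show ?thesis by (rule contracting_solutions_converge[OF smooth _ t0 sx])
  qed
  obtain C where C: "\<And>z. infdist z (\<Inter>i \<in> {1..s}. fix_space (\<gamma> i))
      \<le> C * (\<Sum>i\<in>{1..s}. norm (z - \<gamma> i *v z))"
    using infdist_common_fix_space_le[of "{1..s}" \<gamma>] by blast
  have lim: "((\<lambda>t. C * (\<Sum>i\<in>{1..s}. norm (x t - \<gamma> i *v x t))) \<longlongrightarrow> 0) at_top"
    by (intro tendsto_mult_right_zero tendsto_null_sum tendsto_norm_zero residual)
  have bound: "\<forall>t. norm (infdist (x t) (\<Inter>i \<in> {1..s}. fix_space (\<gamma> i)))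
      \<le> C * (\<Sum>i\<in>{1..s}. norm (x t - \<gamma> i *v x t))"
    using C by (simp add: infdist_nonneg)
  show "((\<lambda>t. infdist (x t) (\<Inter>i \<in> {1..s}. fix_space (\<gamma> i))) \<longlongrightarrow> 0) at_top"
    by (rule Lim_null_comparison[OF always_eventually[OF bound] lim])
qed

end
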